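(* Let $\Delta\in(0,1]$. There exist an MDP and a parameter space $\Theta=\{\theta_1,\theta_2\}$ with $D_{\mathrm{KL}}(p_{\theta_1}\|p_{\theta_2})=\infty$ or $D_{\mathrm{KL}}(p_{\theta_2}\|p_{\theta_1})=\infty$, and $J(\theta_1)-J(\theta_2)=\Delta$, such that for any $n\ge1$ every algorithm for the online policy optimization problem suffers expected regret $\mathbb{E}R(n)\ge\frac{1}{8\Delta}\log(\Delta^2 n)$.
   Context: An MDP with state space $\mathcal S$, action space $\mathcal A$, transition kernel $P$, initial-state distribution $\mu$, reward function and horizon $H$ generates trajectories $\tau=(s_0,a_0,\dots,s_{H-1},a_{H-1})$ with return $\mathcal R(\tau)$. A parametric policy $\pi_\theta(\cdot|s)$, $\theta\in\Theta$, induces the trajectory distribution $p_\theta(\tau)=\mu(s_0)\prod_{h=0}^{H-1}\pi_\theta(a_h|s_h)P(s_{h+1}|s_h,a_h)$, and its expected return is $J(\theta)=\mathbb E_{\tau\sim p_\theta}[\mathcal R(\tau)]$. Online policy optimization (with mediator feedback): at each round $t=1,\dots,n$ the algorithm selects $\theta_t\in\Theta$ as a (possibly randomized) function of the history $\{(\theta_i,\tau_i,\mathcal R(\tau_i))\}_{i<t}$, executes $\pi_{\theta_t}$, and observes a trajectory $\tau_t\sim p_{\theta_t}$ and its return $\mathcal R(\tau_t)$. With $J^*=\sup_{\theta\in\Theta}J(\theta)$ and $\Delta(\theta)=J^*-J(\theta)$, the regret is $R(n)=\sum_{t=1}^n\Delta(\theta_t)$. $D_{\mathrm{KL}}$ denotes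 the Kullback–Leibler divergence. *)

theory Defs
  imports "HOL-Probability.Probability"
begin

record mdp =
  init    :: "nat pmf"
  trans   :: "nat \<Rightarrow> nat \<Rightarrow> nat pmf"
  rew     :: "nat \<Rightarrow> nat \<Rightarrow> real"
  horizon :: nat

type_synonym traj = "(nat \<times> nat) list"

type_synonym policy = "nat \<Rightarrow> nat \<Rightarrow> nat pmf"   \<comment> \<open>theta \<Rightarrow> s \<Rightarrow> pi_theta(.|s)\<close>

definition ret :: "mdp \<Rightarrow> traj \<Rightarrow> real" where
  "ret M \<tau> = sum_list (map (\<lambda>(s, a). rew M s a) \<tau>)"

fun traj_from :: "mdp \<Rightarrow> (nat \<Rightarrow> nat pmf) \<Rightarrow> nat \<Rightarrow> nat \<Rightarrow> traj pmf" where
  "traj_from M pol s 0 = return_pmf []"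
| "traj_from M pol s (Suc k) =
     bind_pmf (pol s) (\<lambda>a. bind_pmf (trans M s a) (\<lambda>s'.
       bind_pmf (traj_from M pol s' k) (\<lambda>rest. return_pmf ((s, a) # rest))))"

definition traj_dist :: "mdp \<Rightarrow> policy \<Rightarrow> nat \<Rightarrow> traj pmf" where
  "traj_dist M \<pi> \<theta> = bind_pmf (init M) (\<lambda>s0. traj_from M (\<pi> \<theta>) s0 (horizon M))"

definition Jret :: "mdp \<Rightarrow> policy \<Rightarrow> nat \<Rightarrow> real" where
  "Jret M \<pi> \<theta> = measure_pmf.expectation (traj_dist M \<pi> \<theta>) (ret M)"

definition KL_pmf :: "'a pmf \<Rightarrow> 'a pmf \<Rightarrow> ereal" where
  "KL_pmf p q =
     (if set_pmf p \<subseteq> set_pmf q \<and>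
         (\<lambda>x. \<bar>pmf p x * ln (pmf p x / pmf q x)\<bar>) summable_on UNIV
      then ereal (\<Sum>\<^sub>\<infinity>x. pmf p x * ln (pmf p x / pmf q x))
      else \<infinity>)"

text \<open>History entries (theta_i, tau_i, R(tau_i)); an algorithm maps the history
of the previous rounds to a (randomized) choice of parameter.\<close>
type_synonym history = "(nat \<times> traj \<times> real) list"
type_synonym algorithm = "history \<Rightarrow> nat pmf"

definition valid_alg :: "nat set \<Rightarrow> algorithm \<Rightarrow> bool" where
  "valid_alg \<Theta> alg \<longleftrightarrow> (\<forall>h. set_pmf (alg h) \<subseteq> \<Theta>)"

fun hist_dist :: "mdp \<Rightarrow> policy \<Rightarrow> algorithm \<Rightarrow> nat \<Rightarrow> history pmf" where
  "hist_dist M \<pi> alg 0 = return_pmf []"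
| "hist_dist M \<pi> alg (Suc t) =
     bind_pmf (hist_dist M \<pi> alg t) (\<lambda>h. bind_pmf (alg h) (\<lambda>\<theta>.
       bind_pmf (traj_dist M \<pi> \<theta>) (\<lambda>\<tau>. return_pmf (h @ [(\<theta>, \<tau>, ret M \<tau>)]))))"

definition Jstar :: "mdp \<Rightarrow> policy \<Rightarrow> nat set \<Rightarrow> real" where
  "Jstar M \<pi> \<Theta> = (SUP \<theta>\<in>\<Theta>. Jret M \<pi> \<theta>)"

definition gap :: "mdp \<Rightarrow> policy \<Rightarrow> nat set \<Rightarrow> nat \<Rightarrow> real" where
  "gap M \<pi> \<Theta> \<theta> = Jstar M \<pi> \<Theta> - Jret M \<pi> \<theta>"

definition regret :: "mdp \<Rightarrow> policy \<Rightarrow> nat set \<Rightarrow> history \<Rightarrow> real" where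
  "regret M \<pi> \<Theta> h = sum_list (map (\<lambda>(\<theta>, _, _). gap M \<pi> \<Theta> \<theta>) h)"

definition exp_regret :: "mdp \<Rightarrow> policy \<Rightarrow> nat set \<Rightarrow> algorithm \<Rightarrow> nat \<Rightarrow> real" where
  "exp_regret M \<pi> \<Theta> alg n =
     measure_pmf.expectation (hist_dist M \<pi> alg n) (regret M \<pi> \<Theta>)"

end

theory Submission
  imports Defs
begin

text \<open>Parameter 0 plays action 0, which leads to a
state without reward; every other parameter plays action 1, which costs \<open>\<Delta>\<close> and reaches a
bonus state paying \<open>4/\<Delta>\<close> with probability \<open>p\<close>. With \<open>p = 0\<close> parameter 0 is optimal,
with \<open>p = \<Delta>\<^sup>2/2\<close> parameter 1 is, and in both cases the gap is \<open>\<Delta>\<close>; the trajectory laws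
of the two parameters have disjoint supports, so the KL divergences are infinite.

The two problems differ only on the rounds that play action 1, and there the second law
dominates \<open>1 - \<Delta>\<^sup>2/2\<close> times the first. Hence, if an algorithm plays action 1 on average
\<open>a\<close> times in the first problem (regret \<open>\<Delta> a\<close>), a change of measure and Jensen's inequality
show that it plays action 0 on average at least \<open>(1 - \<Delta>\<^sup>2/2)\<^bsup>a\<^esup> (n - a) \<ge> e\<^bsup>-\<Delta>\<^sup>2 a\<^esup> (n - a)\<close>
times in the second problem. Balancing \<open>\<Delta> a\<close> against \<open>\<Delta> e\<^bsup>-\<Delta>\<^sup>2 a\<^esup> (n - a)\<close> gives the
logarithmic lower bound.\<close>

lemma KL_pmf_infinite_if_not_subset: "\<not> set_pmf p \<subseteq> set_pmf q \<Longrightarrow> KL_pmf p q = \<infinity>"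
  by (simp add: KL_pmf_def)

lemma length_hist_dist: "h \<in> set_pmf (hist_dist M \<pi> alg t) \<Longrightarrow> length h = t"
  by (induction t arbitrary: h) (auto simp: set_bind_pmf)

lemma hist_dist_change_of_measure:
  fixes w :: "nat \<Rightarrow> real"
  assumes ret_eq: "ret M1 = ret M2" and w_nonneg: "\<And>\<theta>. 0 \<le> w \<theta>"
    and traj_dom: "\<And>\<theta> g. (\<integral>\<^sup>+\<tau>. ennreal (w \<theta>) * g \<tau> \<partial>traj_dist M1 \<pi> \<theta>)
                          \<le> (\<integral>\<^sup>+\<tau>. g \<tau> \<partial>traj_dist M2 \<pi> \<theta>)"
  shows "(\<integral>\<^sup>+h. ennreal (prod_list (map (w \<circ> fst) h)) * g h \<partial>hist_dist M1 \<pi> alg t)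
           \<le> (\<integral>\<^sup>+h. g h \<partial>hist_dist M2 \<pi> alg t)"
proof (induction t arbitrary: g)
  case 0
  then show ?case by simp
next
  case (Suc t)
  define W where "W h = prod_list (map (w \<circ> fst) h)" for h :: history
  have W_nonneg: "0 \<le> W h" for h
    unfolding W_def by (rule prod_list_nonneg) (auto simp: w_nonneg)
  define G where "G h = (\<integral>\<^sup>+\<theta>. \<integral>\<^sup>+\<tau>. g (h @ [(\<theta>, \<tau>, ret M2 \<tau>)]) \<partial>traj_dist M2 \<pi> \<theta> \<partial>alg h)"
    for h
  have weight_factors:
    "(\<integral>\<^sup>+\<theta>. \<integral>\<^sup>+\<tau>. ennreal (W (h @ [(\<theta>, \<tau>, ret M1 \<tau>)])) * g (h @ [(\<theta>, \<tau>, ret M1 \<tau>)])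
                 \<partial>traj_dist M1 \<pi> \<theta> \<partial>alg h)
      = ennreal (W h) * (\<integral>\<^sup>+\<theta>. \<integral>\<^sup>+\<tau>. ennreal (w \<theta>) * g (h @ [(\<theta>, \<tau>, ret M2 \<tau>)])
                 \<partial>traj_dist M1 \<pi> \<theta> \<partial>alg h)" for h
    by (simp add: W_def ret_eq ennreal_mult W_nonneg[unfolded W_def] w_nonneg mult.assoc
        nn_integral_cmult[symmetric])
  have "(\<integral>\<^sup>+h. ennreal (W h) * g h \<partial>hist_dist M1 \<pi> alg (Suc t))
      = (\<integral>\<^sup>+h. ennreal (W h) * (\<integral>\<^sup>+\<theta>. \<integral>\<^sup>+\<tau>. ennreal (w \<theta>) * g (h @ [(\<theta>, \<tau>, ret M2 \<tau>)])
                 \<partial>traj_dist M1 \<pi> \<theta> \<partial>alg h) \<partial>hist_dist M1 \<pi> alg t)"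
    by (simp add: weight_factors)
  also have "\<dots> \<le> (\<integral>\<^sup>+h. ennreal (W h) * G h \<partial>hist_dist M1 \<pi> alg t)"
    unfolding G_def by (intro nn_integral_mono mult_left_mono traj_dom) simp
  also have "\<dots> \<le> (\<integral>\<^sup>+h. G h \<partial>hist_dist M2 \<pi> alg t)"
    unfolding W_def by (rule Suc.IH)
  also have "\<dots> = (\<integral>\<^sup>+h. g h \<partial>hist_dist M2 \<pi> alg (Suc t))"
    by (simp add: G_def)
  finally show ?case by (simp only: W_def)
qed

lemma pmf_expectation_le_of_nn_integral_le:
  fixes f g :: "'a \<Rightarrow> real" and P Q :: "'a pmf"
  assumes "\<And>x. x \<in> set_pmf P \<Longrightarrow> 0 \<le> f x \<and> f x \<le> C"
    and "\<And>x. x \<in> set_pmf Q \<Longrightarrow> 0 \<le> g x \<and> g x \<le> C"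
    and "(\<integral>\<^sup>+x. ennreal (f x) \<partial>P) \<le> (\<integral>\<^sup>+x. ennreal (g x) \<partial>Q)"
  shows "measure_pmf.expectation P f \<le> measure_pmf.expectation Q g"
proof -
  have "integrable P f" "integrable Q g"
    using assms(1,2) by (auto intro!: measure_pmf.integrable_const_bound[where B = C] AE_pmfI)
  moreover have "0 \<le> measure_pmf.expectation Q g"
    using assms(2) by (intro integral_nonneg_AE AE_pmfI) auto
  ultimately show ?thesis
    using assms by (simp add: nn_integral_eq_integral AE_pmfI)
qed

definition zero_rounds :: "history \<Rightarrow> nat" where
  "zero_rounds h = length (filter (\<lambda>x. fst x = 0) h)"

definition nonzero_rounds :: "history \<Rightarrow> nat" where
  "nonzero_rounds h = length (filter (\<lambda>x. fst x \<noteq> 0) h)"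

lemma zero_rounds_add_nonzero_rounds: "zero_rounds h + nonzero_rounds h = length h"
  unfolding zero_rounds_def nonzero_rounds_def by (rule sum_length_filter_compl)

lemma prod_list_weight_eq_power_nonzero_rounds:
  "prod_list (map ((\<lambda>\<theta>. if \<theta> = 0 then 1 else q) \<circ> fst) h) = q ^ nonzero_rounds h"
  by (induction h) (auto simp: nonzero_rounds_def)

lemma regret_two_valued:
  fixes v :: real
  assumes J: "\<And>\<theta>. Jret M \<pi> \<theta> = (if \<theta> = 0 then 0 else v)"
  shows "regret M \<pi> {0, 1} h = max 0 v * zero_rounds h + (max 0 v - v) * nonzero_rounds h"
proof -
  have "Jstar M \<pi> {0, 1} = max 0 v"
    by (simp add: Jstar_def J cSup_insert sup_real_def)
  then have "gap M \<pi> {0, 1} \<theta> = (if \<theta> = 0 then max 0 v else max 0 v - v)" for \<theta>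
    by (simp add: gap_def J)
  then show ?thesis
    unfolding regret_def zero_rounds_def nonzero_rounds_def
    by (induction h) (auto simp: algebra_simps)
qed

lemma exp_le_one_minus_powr:
  fixes p a :: real
  assumes "0 \<le> p" "p \<le> 1/2" "0 \<le> a"
  shows "exp (- (2 * p * a)) \<le> (1 - p) powr a"
proof -
  have "- p - 2 * p\<^sup>2 \<le> ln (1 - p)"
    using assms by (intro ln_one_minus_pos_lower_bound)
  moreover have "2 * p\<^sup>2 \<le> p"
    using mult_left_mono[of "2 * p" 1 p] assms by (simp add: power2_eq_square)
  ultimately have "- (2 * p) \<le> ln (1 - p)" by linarith
  then have "a * (- (2 * p)) \<le> a * ln (1 - p)"
    using assms(3) by (rule mult_left_mono)
  moreover have "(1 - p) powr a = exp (a * ln (1 - p))"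
    using assms by (simp add: powr_def)
  ultimately show ?thesis
    by (simp add: mult.commute mult.left_commute)
qed

text \<open>The left-hand side is the tangent line at \<open>a\<close> of the function \<open>k \<mapsto> q\<^bsup>k\<^esup> (n - k)\<close>,
which is convex for \<open>k \<le> n\<close>.\<close>

lemma powr_mult_diff_ge_tangent:
  fixes q a k n :: real
  assumes "0 < q" "q \<le> 1" "k \<le> n"
  shows "q powr a * ((n - k) + ln q * (n - a) * (k - a)) \<le> q powr k * (n - k)"
proof -
  have "q powr k = q powr a * exp (ln q * (k - a))"
    using assms by (simp add: powr_def exp_add[symmetric] algebra_simps)
  moreover have "1 + ln q * (k - a) \<le> exp (ln q * (k - a))"
    by (rule exp_ge_add_one_self)
  ultimately have "q powr a * ((1 + ln q * (k - a)) * (n - k)) \<le> q powr k * (n - k)"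
    using assms by (simp add: mult.assoc[symmetric] mult_left_mono mult_right_mono)
  moreover have "(n - k) + ln q * (n - a) * (k - a) \<le> (1 + ln q * (k - a)) * (n - k)"
  proof -
    have "ln q * (k - a)\<^sup>2 \<le> 0"
      using assms by (simp add: mult_nonpos_nonneg)
    then show ?thesis by (simp add: power2_eq_square algebra_simps)
  qed
  ultimately show ?thesis
    by (smt (verit) mult_left_mono powr_ge_zero)
qed

lemma expectation_powr_mult_diff_ge:
  fixes P :: "'a pmf" and k :: "'a \<Rightarrow> real" and q n :: real
  assumes q: "0 < q" "q \<le> 1" and k: "\<And>x. x \<in> set_pmf P \<Longrightarrow> 0 \<le> k x \<and> k x \<le> n"
  defines "a \<equiv> measure_pmf.expectation P k"
  shows "q powr a * (n - a) \<le> measure_pmf.expectation P (\<lambda>x. q powr k x * (n - k x))"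
proof -
  have int_k: "integrable P k"
    using k by (auto intro!: measure_pmf.integrable_const_bound[where B = n] AE_pmfI)
  have bounded: "\<bar>q powr k x * (n - k x)\<bar> \<le> n" if "x \<in> set_pmf P" for x
  proof -
    have "q powr k x \<le> 1" "0 \<le> n - k x" "n - k x \<le> n"
      using q k[OF that] by (auto intro: powr_le1)
    then have "q powr k x * (n - k x) \<le> n - k x"
      by (intro mult_left_le_one_le) auto
    then show ?thesis
      using \<open>0 \<le> n - k x\<close> \<open>n - k x \<le> n\<close> by simp
  qed
  have "q powr a * (n - a)
      = measure_pmf.expectation P (\<lambda>x. q powr a * ((n - k x) + ln q * (n - a) * (k x - a)))"
    using int_k by (simp add: a_def algebra_simps)
  also have "\<dots> \<le> measure_pmf.expectation P (\<lambda>x. q powr k x * (n - k x))"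
  proof (rule integral_mono_AE)
    show "integrable P (\<lambda>x. q powr a * ((n - k x) + ln q * (n - a) * (k x - a)))"
      using int_k by simp
    show "integrable P (\<lambda>x. q powr k x * (n - k x))"
      using bounded by (auto intro!: measure_pmf.integrable_const_bound[where B = n] AE_pmfI)
    show "AE x in P. q powr a * ((n - k x) + ln q * (n - a) * (k x - a)) \<le> q powr k x * (n - k x)"
      using q k by (auto intro!: AE_pmfI powr_mult_diff_ge_tangent)
  qed
  finally show ?thesis .
qed

lemma ln_le_mult_exp_neg_ln:
  fixes x :: real
  assumes "1 \<le> x"
  shows "ln x \<le> 4 * (x * exp (- (ln x / 8)))"
proof -
  have "7/8 * ln x = ln x + - (ln x / 8)"
    by simp
  then have "x * exp (- (ln x / 8)) = exp (7/8 * ln x)"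
    using assms by (simp only: exp_add) simp
  moreover have "1 + 7/8 * ln x \<le> exp (7/8 * ln x)"
    by (rule exp_ge_add_one_self)
  moreover have "0 \<le> ln x"
    using assms by simp
  ultimately show ?thesis by linarith
qed

lemma max_linear_exp_tradeoff:
  fixes D a n :: real
  assumes D: "0 < D" and n: "0 < n" and a: "0 \<le> a" "a \<le> n"
  shows "1 / (8 * D) * ln (D\<^sup>2 * n) \<le> max (D * a) (D * (exp (- (D\<^sup>2 * a)) * (n - a)))"
proof -
  define x where "x = D\<^sup>2 * n"
  have x: "0 < x" using D n by (simp add: x_def)
  consider "x \<le> 1" | "n / 2 \<le> a" | "ln x \<le> 8 * D\<^sup>2 * a" | "1 < x" "a < n / 2" "8 * D\<^sup>2 * a < ln x"
    by linarith
  then have "1 / (8 * D) * ln x \<le> max (D * a) (D * (exp (- (D\<^sup>2 * a)) * (n - a)))"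
  proof cases
    case 1
    then have "ln x \<le> 0"
      using x by simp
    then have "1 / (8 * D) * ln x \<le> 0"
      using D by (simp add: divide_nonpos_pos)
    then show ?thesis using D a by (smt (verit) max.cobounded1 zero_le_mult_iff)
  next
    case 2
    have "1 / (8 * D) * ln x \<le> 1 / (8 * D) * x"
      using x D by (intro mult_left_mono less_imp_le[OF ln_less_self]) auto
    also have "\<dots> = D * n / 8"
      using D by (simp add: x_def power2_eq_square)
    also have "\<dots> \<le> D * a"
      using mult_left_mono[of "n / 8" a D] 2 D a by simp
    finally show ?thesis by linarith
  next
    case 3
    then have "1 / (8 * D) * ln x \<le> 1 / (8 * D) * (8 * D\<^sup>2 * a)"
      using D by (intro mult_left_mono) auto
    also have "\<dots> = D * a"
      using D by (simp add: power2_eq_square)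
    finally show ?thesis by linarith
  next
    case 4
    have "1 / (8 * D) * ln x \<le> 1 / (8 * D) * (4 * (x * exp (- (ln x / 8))))"
      using 4 D by (intro mult_left_mono ln_le_mult_exp_neg_ln) auto
    also have "\<dots> = D * (exp (- (ln x / 8)) * (n / 2))"
      using D by (simp add: x_def power2_eq_square field_simps)
    also have "\<dots> \<le> D * (exp (- (D\<^sup>2 * a)) * (n - a))"
      using 4 D n by (intro mult_left_mono mult_mono) auto
    finally show ?thesis by linarith
  qed
  then show ?thesis by (simp add: x_def)
qed

definition bonus_mdp :: "real \<Rightarrow> real \<Rightarrow> mdp" where
  "bonus_mdp D p =
     \<lparr>init = return_pmf 0,
      trans = (\<lambda>s a. if a = 0 then return_pmf 3
                     else map_pmf (\<lambda>b. if b then 2 else 1) (bernoulli_pmf p)),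
      rew = (\<lambda>s a. if s = 0 \<and> a \<noteq> 0 then - D else if s = 2 then 4 / D else 0),
      horizon = 2\<rparr>"

definition two_action_policy :: policy where
  "two_action_policy \<theta> s = return_pmf (if \<theta> = 0 then 0 else 1)"

lemma traj_dist_bonus_mdp:
  "traj_dist (bonus_mdp D p) two_action_policy \<theta> =
     (if \<theta> = 0 then return_pmf [(0, 0), (3, 0)]
      else map_pmf (\<lambda>b. [(0, 1), (if b then 2 else 1, 1)]) (bernoulli_pmf p))"
  by (simp add: traj_dist_def bonus_mdp_def two_action_policy_def numeral_2_eq_2 map_pmf_def
      bind_assoc_pmf bind_return_pmf)

lemma ret_bonus_mdp: "ret (bonus_mdp D p) = ret (bonus_mdp D p')"
  by (simp add: ret_def bonus_mdp_def fun_eq_iff)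

lemma Jret_bonus_mdp:
  assumes "0 \<le> p" "p \<le> 1"
  shows "Jret (bonus_mdp D p) two_action_policy \<theta> = (if \<theta> = 0 then 0 else 4 * p / D - D)"
  using assms unfolding Jret_def traj_dist_bonus_mdp
  by (simp add: ret_def bonus_mdp_def algebra_simps)

lemma Jret_bonus_mdp_instances:
  assumes "0 < D" "D \<le> 1"
  shows "Jret (bonus_mdp D 0) two_action_policy \<theta> = (if \<theta> = 0 then 0 else - D)"
    and "Jret (bonus_mdp D (D\<^sup>2 / 2)) two_action_policy \<theta> = (if \<theta> = 0 then 0 else D)"
proof -
  have "D\<^sup>2 \<le> 1"
    using assms by (simp add: power_le_one)
  then show "Jret (bonus_mdp D (D\<^sup>2 / 2)) two_action_policy \<theta> = (if \<theta> = 0 then 0 else D)"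
    using assms by (simp add: Jret_bonus_mdp power2_eq_square)
qed (simp add: Jret_bonus_mdp)

lemma KL_pmf_bonus_mdp:
  "KL_pmf (traj_dist (bonus_mdp D p) two_action_policy 0)
     (traj_dist (bonus_mdp D p) two_action_policy 1) = \<infinity>"
  by (rule KL_pmf_infinite_if_not_subset) (auto simp: traj_dist_bonus_mdp)

lemma traj_dist_bonus_mdp_dominates:
  assumes "0 \<le> p" "p \<le> 1"
  shows "(\<integral>\<^sup>+\<tau>. ennreal (if \<theta> = 0 then 1 else 1 - p) * g \<tau>
             \<partial>traj_dist (bonus_mdp D 0) two_action_policy \<theta>)
           \<le> (\<integral>\<^sup>+\<tau>. g \<tau> \<partial>traj_dist (bonus_mdp D p) two_action_policy \<theta>)"
  using assms by (simp add: traj_dist_bonus_mdp mult.commute)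

lemma rounds_hist_dist: "h \<in> set_pmf (hist_dist M \<pi> alg n) \<Longrightarrow> zero_rounds h + nonzero_rounds h = n"
  using zero_rounds_add_nonzero_rounds length_hist_dist by metis

lemma expectation_zero_rounds_bonus_mdp_change_of_measure:
  fixes D p :: real and alg :: algorithm and n :: nat
  assumes "0 \<le> p" "p \<le> 1"
  shows "measure_pmf.expectation (hist_dist (bonus_mdp D 0) two_action_policy alg n)
           (\<lambda>h. (1 - p) ^ nonzero_rounds h * zero_rounds h)
         \<le> measure_pmf.expectation (hist_dist (bonus_mdp D p) two_action_policy alg n)
              (\<lambda>h. real (zero_rounds h))"
proof (rule pmf_expectation_le_of_nn_integral_le[where C = n])
  let ?A = "hist_dist (bonus_mdp D 0) two_action_policy alg n"
  let ?B = "hist_dist (bonus_mdp D p) two_action_policy alg n"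
  show "0 \<le> (1 - p) ^ nonzero_rounds h * zero_rounds h
      \<and> (1 - p) ^ nonzero_rounds h * zero_rounds h \<le> n"
    if "h \<in> set_pmf ?A" for h
  proof -
    have "(1 - p) ^ nonzero_rounds h \<le> 1"
      using assms by (simp add: power_le_one)
    then have "(1 - p) ^ nonzero_rounds h * zero_rounds h \<le> zero_rounds h"
      using assms by (intro mult_left_le_one_le) auto
    then show ?thesis
      using rounds_hist_dist[OF that] assms by auto
  qed
  show "0 \<le> real (zero_rounds h) \<and> real (zero_rounds h) \<le> n" if "h \<in> set_pmf ?B" for h
    using rounds_hist_dist[OF that] by auto
  have "(\<integral>\<^sup>+h. ennreal (prod_list (map ((\<lambda>\<theta>. if \<theta> = 0 then 1 else 1 - p) \<circ> fst) h))
               * ennreal (zero_rounds h) \<partial>?A) \<le> (\<integral>\<^sup>+h. ennreal (zero_rounds h) \<partial>?B)"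
    using assms
    by (intro hist_dist_change_of_measure ret_bonus_mdp traj_dist_bonus_mdp_dominates) auto
  then show "(\<integral>\<^sup>+h. ennreal ((1 - p) ^ nonzero_rounds h * zero_rounds h) \<partial>?A)
      \<le> (\<integral>\<^sup>+h. ennreal (zero_rounds h) \<partial>?B)"
    using assms by (simp add: prod_list_weight_eq_power_nonzero_rounds ennreal_mult)
qed

lemma expectation_zero_rounds_bonus_mdp_ge:
  fixes D p :: real and alg :: algorithm and n :: nat
  assumes "0 \<le> p" "p < 1"
  defines "a \<equiv> measure_pmf.expectation (hist_dist (bonus_mdp D 0) two_action_policy alg n)
                 (\<lambda>h. real (nonzero_rounds h))"
  shows "(1 - p) powr a * (real n - a)
           \<le> measure_pmf.expectation (hist_dist (bonus_mdp D p) two_action_policy alg n)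
                (\<lambda>h. real (zero_rounds h))"
proof -
  let ?A = "hist_dist (bonus_mdp D 0) two_action_policy alg n"
  have q: "0 < 1 - p" "1 - p \<le> 1"
    using assms by auto
  have "(1 - p) powr a * (real n - a)
      \<le> measure_pmf.expectation ?A
           (\<lambda>h. (1 - p) powr real (nonzero_rounds h) * (real n - real (nonzero_rounds h)))"
    unfolding a_def using rounds_hist_dist
    by (intro expectation_powr_mult_diff_ge q) (metis le_add2 of_nat_0_le_iff of_nat_mono)
  also have "\<dots> = measure_pmf.expectation ?A (\<lambda>h. (1 - p) ^ nonzero_rounds h * zero_rounds h)"
  proof (intro integral_cong_AE AE_pmfI)
    fix h assume "h \<in> set_pmf ?A"
    then have "real n - real (nonzero_rounds h) = real (zero_rounds h)"
      using rounds_hist_dist by (metis add_diff_cancel_right' of_nat_add)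
    then show "(1 - p) powr real (nonzero_rounds h) * (real n - real (nonzero_rounds h))
        = (1 - p) ^ nonzero_rounds h * real (zero_rounds h)"
      using q by (simp add: powr_realpow)
  qed simp_all
  also have "\<dots> \<le> measure_pmf.expectation (hist_dist (bonus_mdp D p) two_action_policy alg n)
                     (\<lambda>h. real (zero_rounds h))"
    using assms by (intro expectation_zero_rounds_bonus_mdp_change_of_measure) auto
  finally show ?thesis .
qed

lemma exp_regret_bonus_mdp_instances:
  fixes D :: real and alg :: algorithm and n :: nat
  assumes D: "0 < D" "D \<le> 1"
  shows "exp_regret (bonus_mdp D 0) two_action_policy {0, 1} alg n
           = D * measure_pmf.expectation (hist_dist (bonus_mdp D 0) two_action_policy alg n)
                   (\<lambda>h. real (nonzero_rounds h))"
    and "exp_regret (bonus_mdp D (D\<^sup>2 / 2)) two_action_policy {0, 1} alg n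
           = D * measure_pmf.expectation (hist_dist (bonus_mdp D (D\<^sup>2 / 2)) two_action_policy alg n)
                   (\<lambda>h. real (zero_rounds h))"
proof -
  have "regret (bonus_mdp D 0) two_action_policy {0, 1} = (\<lambda>h. D * nonzero_rounds h)"
    using regret_two_valued[OF Jret_bonus_mdp_instances(1)[OF D]] D by (simp add: fun_eq_iff)
  then show "exp_regret (bonus_mdp D 0) two_action_policy {0, 1} alg n
      = D * measure_pmf.expectation (hist_dist (bonus_mdp D 0) two_action_policy alg n)
              (\<lambda>h. real (nonzero_rounds h))"
    by (simp add: exp_regret_def)
  have "regret (bonus_mdp D (D\<^sup>2 / 2)) two_action_policy {0, 1} = (\<lambda>h. D * zero_rounds h)"
    using regret_two_valued[OF Jret_bonus_mdp_instances(2)[OF D]] D by (simp add: fun_eq_iff)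
  then show "exp_regret (bonus_mdp D (D\<^sup>2 / 2)) two_action_policy {0, 1} alg n
      = D * measure_pmf.expectation (hist_dist (bonus_mdp D (D\<^sup>2 / 2)) two_action_policy alg n)
              (\<lambda>h. real (zero_rounds h))"
    by (simp add: exp_regret_def)
qed

lemma bonus_mdp_regret_tradeoff:
  fixes D :: real and alg :: algorithm and n :: nat
  assumes D: "0 < D" "D \<le> 1"
  obtains a where "0 \<le> a" "a \<le> real n"
    "exp_regret (bonus_mdp D 0) two_action_policy {0, 1} alg n = D * a"
    "D * (exp (- (D\<^sup>2 * a)) * (real n - a))
       \<le> exp_regret (bonus_mdp D (D\<^sup>2 / 2)) two_action_policy {0, 1} alg n"
proof -
  let ?A = "hist_dist (bonus_mdp D 0) two_action_policy alg n"
  let ?B = "hist_dist (bonus_mdp D (D\<^sup>2 / 2)) two_action_policy alg n"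
  define a where "a = measure_pmf.expectation ?A (\<lambda>h. real (nonzero_rounds h))"
  have "D\<^sup>2 \<le> 1"
    using D by (simp add: power_le_one)
  then have p: "0 \<le> D\<^sup>2 / 2" "D\<^sup>2 / 2 \<le> 1/2"
    by auto
  have nonzero_le: "nonzero_rounds h \<le> n" if "h \<in> set_pmf ?A" for h
    using rounds_hist_dist[OF that] by simp
  have a_nonneg: "0 \<le> a"
    unfolding a_def by simp
  have a_le: "a \<le> real n"
    unfolding a_def using nonzero_le
    by (intro measure_pmf.integral_le_const)
      (auto intro!: AE_pmfI measure_pmf.integrable_const_bound[where B = n])
  have "D * (exp (- (D\<^sup>2 * a)) * (real n - a)) \<le> D * ((1 - D\<^sup>2 / 2) powr a * (real n - a))"
    using exp_le_one_minus_powr[OF p a_nonneg] a_le D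
    by (intro mult_left_mono mult_right_mono) auto
  also have "\<dots> \<le> D * measure_pmf.expectation ?B (\<lambda>h. real (zero_rounds h))"
    using expectation_zero_rounds_bonus_mdp_ge[of "D\<^sup>2 / 2" D alg n] p D
    unfolding a_def by (intro mult_left_mono) auto
  finally have "D * (exp (- (D\<^sup>2 * a)) * (real n - a))
       \<le> exp_regret (bonus_mdp D (D\<^sup>2 / 2)) two_action_policy {0, 1} alg n"
    unfolding exp_regret_bonus_mdp_instances(2)[OF D] .
  moreover have "exp_regret (bonus_mdp D 0) two_action_policy {0, 1} alg n = D * a"
    unfolding exp_regret_bonus_mdp_instances(1)[OF D] a_def ..
  ultimately show thesis
    using a_nonneg a_le that by blast
qed

lemma max_exp_regret_bonus_mdp_ge:
  fixes D :: real and alg :: algorithm and n :: nat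
  assumes D: "0 < D" "D \<le> 1" and n: "1 \<le> n"
  shows "1 / (8 * D) * ln (D\<^sup>2 * n)
           \<le> max (exp_regret (bonus_mdp D 0) two_action_policy {0, 1} alg n)
                  (exp_regret (bonus_mdp D (D\<^sup>2 / 2)) two_action_policy {0, 1} alg n)"
proof -
  obtain a where a: "0 \<le> a" "a \<le> real n"
    "exp_regret (bonus_mdp D 0) two_action_policy {0, 1} alg n = D * a"
    "D * (exp (- (D\<^sup>2 * a)) * (real n - a))
       \<le> exp_regret (bonus_mdp D (D\<^sup>2 / 2)) two_action_policy {0, 1} alg n"
    using bonus_mdp_regret_tradeoff[OF D, where alg = alg and n = n] .
  have "1 / (8 * D) * ln (D\<^sup>2 * n) \<le> max (D * a) (D * (exp (- (D\<^sup>2 * a)) * (real n - a)))"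
    using D n a(1,2) by (intro max_linear_exp_tradeoff) auto
  also have "\<dots> \<le> max (exp_regret (bonus_mdp D 0) two_action_policy {0, 1} alg n)
                  (exp_regret (bonus_mdp D (D\<^sup>2 / 2)) two_action_policy {0, 1} alg n)"
    using a(3,4) by (intro max.mono) simp_all
  finally show ?thesis .
qed

theorem theorem2:
  fixes \<Delta> :: real
  assumes "0 < \<Delta>" and "\<Delta> \<le> 1"
  shows "\<exists>(M1::mdp) (\<pi>1::policy) (M2::mdp) (\<pi>2::policy) (\<theta>1::nat) \<theta>2.
           \<theta>1 \<noteq> \<theta>2 \<and>
           (KL_pmf (traj_dist M1 \<pi>1 \<theta>1) (traj_dist M1 \<pi>1 \<theta>2) = \<infinity> \<or>
            KL_pmf (traj_dist M1 \<pi>1 \<theta>2) (traj_dist M1 \<pi>1 \<theta>1) = \<infinity>) \<and>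
           (KL_pmf (traj_dist M2 \<pi>2 \<theta>1) (traj_dist M2 \<pi>2 \<theta>2) = \<infinity> \<or>
            KL_pmf (traj_dist M2 \<pi>2 \<theta>2) (traj_dist M2 \<pi>2 \<theta>1) = \<infinity>) \<and>
           Jret M1 \<pi>1 \<theta>1 - Jret M1 \<pi>1 \<theta>2 = \<Delta> \<and>
           Jret M2 \<pi>2 \<theta>2 - Jret M2 \<pi>2 \<theta>1 = \<Delta> \<and>
           (\<forall>n::nat. n \<ge> 1 \<longrightarrow> (\<forall>alg. valid_alg {\<theta>1, \<theta>2} alg \<longrightarrow>
              max (exp_regret M1 \<pi>1 {\<theta>1, \<theta>2} alg n) (exp_regret M2 \<pi>2 {\<theta>1, \<theta>2} alg n)
                \<ge> 1 / (8 * \<Delta>) * ln (\<Delta>^2 * real n)))"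
proof -
  have value_gaps: "Jret (bonus_mdp \<Delta> 0) two_action_policy 0 - Jret (bonus_mdp \<Delta> 0) two_action_policy 1 = \<Delta>"
    "Jret (bonus_mdp \<Delta> (\<Delta>\<^sup>2 / 2)) two_action_policy 1
       - Jret (bonus_mdp \<Delta> (\<Delta>\<^sup>2 / 2)) two_action_policy 0 = \<Delta>"
    using Jret_bonus_mdp_instances[OF assms] by simp_all
  show ?thesis
    by (rule exI[of _ "bonus_mdp \<Delta> 0"], rule exI[of _ two_action_policy],
        rule exI[of _ "bonus_mdp \<Delta> (\<Delta>\<^sup>2 / 2)"], rule exI[of _ two_action_policy],
        rule exI[of _ 0], rule exI[of _ 1])
      (use value_gaps KL_pmf_bonus_mdp max_exp_regret_bonus_mdp_ge[OF assms] in auto)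
qed

end
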